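(* Let $r\ge 2$ and let $G$ be a finite graph with $n\le r-1$ vertices, each of degree at least $1$. Consider $\mathcal{F}_{\mathcal{A},I_r}(G)$ (defined in the context) as a function of the parameters $(x_1,\dots,x_{r-1},t)\in\mathbb{C}^r$. Then this function determines the numbers $N_\lambda(G)$ uniquely: if complex numbers $a_\lambda$, indexed by partitions $\lambda$ with $|\lambda|\le n$, satisfy $\mathcal{F}_{\mathcal{A},I_r}(G)=\sum_{|\lambda|\le n}t^{n-|\lambda|}p_\lambda(x_1,\dots,x_{r-1})\,a_\lambda$ for all values of the parameters, then $a_\lambda=N_\lambda(G)$ for all such $\lambda$.
   Context: For $x_1,\dots,x_{r-1},t\in\mathbb{C}$: $V=\mathbb{C}^r$, $B=I_r$, $A_1^i=t$ if $i=r$ and $0$ otherwise; for $d\ge2$, $A_d^{i_1\dots i_d}=x_i$ if $(i_1,\dots,i_d)$ is a permutation of $(i,i,r,\dots,r)$ with $i\in\{1,\dots,r-1\}$, $=t$ if $(i_1,\dots,i_d)=(r,\dots,r)$, and $0$ otherwise. $\mathcal{F}_{\mathcal{A},B}(G)=\sum_{c:H\to\{1,\dots,r\}}\prod_{\{h,h'\}\in E(G)}B_{c(h)c(h')}\prod_{k}A_{d_k}^{c(h_{k,1})\dots c(h_{k,d_k})}$, where $H$ is the set of half-edges of $G$ (two per edge, loops included) and $h_{k,1},\dots,h_{k,d_k}$ are the half-edges at vertex $v_k$ of degree $d_k$. A cycle of $G$ is a $2$-valent subgraph (possibly disconnected or empty); its type is the partition formed by the numbers of edges of its connected components; $N_\lambda(G)$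 is the number of cycles of type $\lambda$. $p_k=\sum_i x_i^k$, $p_\lambda=\prod_j p_{k_j}$ for $\lambda=[k_1,\dots,k_l]$, $p_\emptyset=1$, $|\lambda|=\sum k_j$. *)

theory Defs
  imports Complex_Main "HOL-Library.FuncSet" "HOL-Library.Multiset"
begin

text \<open>A finite multigraph (loops and multiple edges allowed) is given by a finite vertex
set V, a finite edge set E, and for each edge e its ordered pair of endpoints ends e.
Each edge e has two half-edges (e,False) and (e,True); (e,False) sits at fst (ends e),
(e,True) at snd (ends e).  A loop thus gives two half-edges at the same vertex.\<close>

definition half_edges :: "'e set \<Rightarrow> ('e \<times> bool) set" where
  "half_edges E = E \<times> (UNIV :: bool set)"

definition hv :: "('e \<Rightarrow> 'v \<times> 'v) \<Rightarrow> 'e \<times> bool \<Rightarrow> 'v" where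
  "hv ends h = (if snd h then snd (ends (fst h)) else fst (ends (fst h)))"

text \<open>Degree of v w.r.t. an edge set S (loops count twice).\<close>
definition sdeg :: "('e \<Rightarrow> 'v \<times> 'v) \<Rightarrow> 'e set \<Rightarrow> 'v \<Rightarrow> nat" where
  "sdeg ends S v = card {h \<in> half_edges S. hv ends h = v}"

text \<open>B = I_r, colours are 1..r.\<close>
definition Bmat :: "nat \<Rightarrow> nat \<Rightarrow> complex" where
  "Bmat i j = (if i = j then 1 else 0)"

text \<open>The symmetric tensor A_d evaluated at the multiset M of colours (d = size M, d \<ge> 1).\<close>
definition Aten :: "nat \<Rightarrow> (nat \<Rightarrow> complex) \<Rightarrow> complex \<Rightarrow> nat multiset \<Rightarrow> complex" where
  "Aten r x t M =
     (if 1 \<le> size M \<and> M = replicate_mset (size M) r then t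
      else if 2 \<le> size M \<and> (\<exists>i\<in>{1..<r}. M = add_mset i (add_mset i (replicate_mset (size M - 2) r)))
        then x (THE i. i \<in> {1..<r} \<and> M = add_mset i (add_mset i (replicate_mset (size M - 2) r)))
      else 0)"

definition FAB :: "nat \<Rightarrow> (nat \<Rightarrow> complex) \<Rightarrow> complex \<Rightarrow> 'v set \<Rightarrow> 'e set \<Rightarrow> ('e \<Rightarrow> 'v \<times> 'v) \<Rightarrow> complex" where
  "FAB r x t V E ends =
     (\<Sum>c \<in> half_edges E \<rightarrow>\<^sub>E {1..r}.
        (\<Prod>e\<in>E. Bmat (c (e, False)) (c (e, True))) *
        (\<Prod>v\<in>V. Aten r x t (image_mset c (mset_set {h \<in> half_edges E. hv ends h = v}))))"

text \<open>Cycles: 2-valent subgraphs, i.e. edge sets in which every vertex has degree 0 or 2.\<close>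
definition is_cycle :: "'v set \<Rightarrow> 'e set \<Rightarrow> ('e \<Rightarrow> 'v \<times> 'v) \<Rightarrow> 'e set \<Rightarrow> bool" where
  "is_cycle V E ends S \<longleftrightarrow> S \<subseteq> E \<and> (\<forall>v\<in>V. sdeg ends S v = 0 \<or> sdeg ends S v = 2)"

definition endpts :: "('e \<Rightarrow> 'v \<times> 'v) \<Rightarrow> 'e \<Rightarrow> 'v set" where
  "endpts ends e = {fst (ends e), snd (ends e)}"

text \<open>Connected components of the subgraph formed by S, as classes of edges.\<close>
definition comp_rel :: "('e \<Rightarrow> 'v \<times> 'v) \<Rightarrow> 'e set \<Rightarrow> ('e \<times> 'e) set" where
  "comp_rel ends S = {(e, e'). e \<in> S \<and> e' \<in> S \<and> endpts ends e \<inter> endpts ends e' \<noteq> {}}\<^sup>+"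

definition cycle_type :: "('e \<Rightarrow> 'v \<times> 'v) \<Rightarrow> 'e set \<Rightarrow> nat multiset" where
  "cycle_type ends S = image_mset card (mset_set (S // comp_rel ends S))"

definition Ncyc :: "'v set \<Rightarrow> 'e set \<Rightarrow> ('e \<Rightarrow> 'v \<times> 'v) \<Rightarrow> nat multiset \<Rightarrow> nat" where
  "Ncyc V E ends lam = card {S. is_cycle V E ends S \<and> cycle_type ends S = lam}"

text \<open>Partitions as multisets of positive integers; |lam| = sum_mset lam.\<close>
definition partitions_upto :: "nat \<Rightarrow> nat multiset set" where
  "partitions_upto n = {lam. (\<forall>k\<in>#lam. 0 < k) \<and> sum_mset lam \<le> n}"

definition pk :: "nat \<Rightarrow> (nat \<Rightarrow> complex) \<Rightarrow> nat \<Rightarrow> complex" where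
  "pk r x k = (\<Sum>i\<in>{1..<r}. x i ^ k)"

definition plam :: "nat \<Rightarrow> (nat \<Rightarrow> complex) \<Rightarrow> nat multiset \<Rightarrow> complex" where
  "plam r x lam = prod_mset (image_mset (pk r x) lam)"

end

theory Submission
  imports Defs
begin

text \<open>With B the identity only colourings that are constant on edges contribute. An edge of
  colour r is invisible to the tensors: a vertex contributes t if it meets no other colour, x_i if
  the other colours at it are exactly two half-edges of colour i, and 0 otherwise. So the edges
  not coloured r form a cycle S, coloured constantly on each connected component, and summing
  over the colours of the components gives F = sum over cycles S of t^(n - |S|) p_(type S),
  that is, the expansion with a_lambda = N_lambda.

  Uniqueness holds because the p_lambda with at most n < r parts are linearly independent
  functions of x_1, ..., x_(r-1) (put t = 1).\<close>

section \<open>Linear independence of products of power sums\<close>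

lemma base_expansion_less:
  fixes d :: "nat \<Rightarrow> nat"
  assumes "\<And>i. i < K \<Longrightarrow> d i < B"
  shows "(\<Sum>i<K. d i * B ^ i) < B ^ K"
  using assms
proof (induction K)
  case 0
  then show ?case by simp
next
  case (Suc K)
  then have "(\<Sum>i<Suc K. d i * B ^ i) < (d K + 1) * B ^ K" by simp
  also have "\<dots> \<le> B * B ^ K"
    using Suc.prems[of K] by (intro mult_right_mono) auto
  finally show ?case by simp
qed

lemma base_expansion_unique:
  fixes a b :: "nat \<Rightarrow> nat"
  assumes "\<And>i. i < K \<Longrightarrow> a i < B" and "\<And>i. i < K \<Longrightarrow> b i < B"
    and "(\<Sum>i<K. a i * B ^ i) = (\<Sum>i<K. b i * B ^ i)"
    and "i < K"
  shows "a i = b i"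
  using assms
proof (induction K)
  case 0
  then show ?case by simp
next
  case (Suc K)
  let ?a = "\<Sum>i<K. a i * B ^ i" and ?b = "\<Sum>i<K. b i * B ^ i"
  have "?a < B ^ K" "?b < B ^ K"
    using Suc.prems(1,2) by (auto intro!: base_expansion_less)
  moreover have sums: "?a + a K * B ^ K = ?b + b K * B ^ K"
    using Suc.prems(3) by simp
  ultimately have "a K = b K"
    by (metis div_mult_self1 div_less add.right_neutral less_nat_zero_code neq0_conv)
  then show ?case
    using Suc sums by (cases "i = K") auto
qed

text \<open>Under x_i = u^(B^i), the term of p_(mset M) sending the j-th part of M to the variable
  f j is u^(monomial_exponent B M f); when B exceeds the sum of M, digit M f i is its i-th digit
  in base B.\<close>
definition monomial_exponent :: "nat \<Rightarrow> nat list \<Rightarrow> (nat \<Rightarrow> nat) \<Rightarrow> nat" where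
  "monomial_exponent B M f = (\<Sum>j<length M. M ! j * B ^ f j)"

definition digit :: "nat list \<Rightarrow> (nat \<Rightarrow> nat) \<Rightarrow> nat \<Rightarrow> nat" where
  "digit M f i = (\<Sum>j | j < length M \<and> f j = i. M ! j)"

lemma monomial_exponent_eq_sum_digits:
  assumes "\<And>j. j < length M \<Longrightarrow> f j < K"
  shows "monomial_exponent B M f = (\<Sum>i<K. digit M f i * B ^ i)"
proof -
  have "monomial_exponent B M f = (\<Sum>i<K. \<Sum>j | j \<in> {..<length M} \<and> f j = i. M ! j * B ^ f j)"
    unfolding monomial_exponent_def by (rule sum.group[symmetric]) (use assms in auto)
  also have "\<dots> = (\<Sum>i<K. digit M f i * B ^ i)"
    unfolding digit_def sum_distrib_right by (intro sum.cong) auto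
  finally show ?thesis .
qed

lemma digit_le_sum_list: "digit M f i \<le> sum_list M"
proof -
  have "digit M f i \<le> (\<Sum>j<length M. M ! j)"
    unfolding digit_def by (rule sum_mono2) auto
  then show ?thesis
    by (simp add: sum_list_sum_nth atLeast0LessThan)
qed

lemma digit_Suc: "i \<in> {1..length L} \<Longrightarrow> digit L Suc i = L ! (i - 1)"
proof -
  assume "i \<in> {1..length L}"
  then have "{j. j < length L \<and> Suc j = i} = {i - 1}" by auto
  then show ?thesis unfolding digit_def by simp
qed

lemma mset_eq_nth_image: "mset M = image_mset (nth M) (mset_set {..<length M})"
  by (metis map_nth mset_map mset_upt lessThan_atLeast0)

text \<open>If the digits of M placed by f reproduce those of a list L of positive parts placed at
  1, ..., length L, then every place is hit, so f is a bijection onto these places.\<close>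
lemma mset_eq_if_digits_eq:
  assumes pos: "\<forall>k\<in>set L. 0 < k" and len: "length M \<le> length L"
    and digits: "\<And>i. i \<in> {1..length L} \<Longrightarrow> digit M f i = L ! (i - 1)"
  shows "mset M = mset L"
proof -
  let ?m = "length M" and ?l = "length L"
  have hit: "{1..?l} \<subseteq> f ` {..<?m}"
  proof
    fix i assume "i \<in> {1..?l}"
    then have "digit M f i \<noteq> 0" using digits pos by auto
    then obtain j where "j < ?m" "f j = i"
      unfolding digit_def by (metis (mono_tags, lifting) empty_Collect_eq sum.empty)
    then show "i \<in> f ` {..<?m}" by blast
  qed
  then have "?l \<le> card (f ` {..<?m})" using card_mono[OF _ hit] by simp
  moreover have "card (f ` {..<?m}) \<le> ?m" using card_image_le[of "{..<?m}" f] by simp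
  ultimately have card_eq: "card (f ` {..<?m}) = ?m" and "?m = ?l" using len by auto
  then have inj: "inj_on f {..<?m}" by (intro eq_card_imp_inj_on) auto
  have onto: "f ` {..<?m} = {1..?l}"
    using hit card_eq \<open>?m = ?l\<close> by (intro card_subset_eq[symmetric]) auto
  have "M ! j = L ! (f j - 1)" if "j < ?m" for j
  proof -
    have "{j'. j' < ?m \<and> f j' = f j} = {j}" using inj that by (auto dest: inj_onD)
    then have "digit M f (f j) = M ! j" unfolding digit_def by simp
    moreover have "f j \<in> {1..?l}" using onto that by blast
    ultimately show ?thesis using digits by metis
  qed
  then have "mset M = image_mset (\<lambda>i. L ! (i - 1)) (image_mset f (mset_set {..<?m}))"
    unfolding mset_eq_nth_image[of M] image_mset.compositionality by (intro image_mset_cong) auto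
  also have "image_mset f (mset_set {..<?m}) = image_mset Suc (mset_set {..<?l})"
    using image_mset_mset_set[OF inj] onto \<open>?m = ?l\<close>
    by (simp add: image_mset_mset_set image_Suc_lessThan)
  finally show ?thesis
    by (simp add: mset_eq_nth_image[of L] image_mset.compositionality comp_def)
qed

lemma length_sorted_list_of_multiset [simp]: "length (sorted_list_of_multiset M) = size M"
  by (metis mset_sorted_list_of_multiset size_mset)

lemma sum_list_sorted_list_of_multiset [simp]:
  "sum_list (sorted_list_of_multiset M) = sum_mset M"
  by (metis mset_sorted_list_of_multiset sum_mset_sum_list)

lemma monomial_exponent_eq_imp_eq:
  fixes mu lam :: "nat multiset"
  assumes "sum_mset mu < B" "sum_mset lam < B" "\<forall>k\<in>#lam. 0 < k"
    and "size mu \<le> size lam" "size lam < K" "\<And>j. j < size mu \<Longrightarrow> f j < K"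
    and "monomial_exponent B (sorted_list_of_multiset mu) f =
      monomial_exponent B (sorted_list_of_multiset lam) Suc"
  shows "mu = lam"
proof -
  let ?M = "sorted_list_of_multiset mu" and ?L = "sorted_list_of_multiset lam"
  have "(\<Sum>i<K. digit ?M f i * B ^ i) = (\<Sum>i<K. digit ?L Suc i * B ^ i)"
    using assms(5-7) monomial_exponent_eq_sum_digits[of ?M f K B]
      monomial_exponent_eq_sum_digits[of ?L Suc K B] by simp
  moreover have "digit ?M f i < B" "digit ?L Suc i < B" for i
    using assms(1,2) digit_le_sum_list[of ?M f i] digit_le_sum_list[of ?L Suc i] by simp_all
  ultimately have "digit ?M f i = digit ?L Suc i" if "i < K" for i
    using that base_expansion_unique[of K "digit ?M f" B "digit ?L Suc" i] by blast
  then have "mset ?M = mset ?L"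
    using assms(3-5) digit_Suc by (intro mset_eq_if_digits_eq[where f = f]) auto
  then show ?thesis by simp
qed

lemma plam_power_substitution:
  fixes u :: complex
  shows "plam r (\<lambda>i. u ^ B ^ i) mu =
    (\<Sum>f\<in>{..<size mu} \<rightarrow>\<^sub>E {1..<r}. u ^ monomial_exponent B (sorted_list_of_multiset mu) f)"
proof -
  let ?M = "sorted_list_of_multiset mu"
  have "plam r (\<lambda>i. u ^ B ^ i) mu = (\<Prod>j<size mu. \<Sum>i\<in>{1..<r}. u ^ (?M ! j * B ^ i))"
    unfolding plam_def pk_def
    by (subst mset_sorted_list_of_multiset[symmetric, of mu], subst mset_eq_nth_image)
      (simp add: image_mset.compositionality prod_unfold_prod_mset power_mult[symmetric] mult.commute comp_def)
  also have "\<dots> = (\<Sum>f\<in>{..<size mu} \<rightarrow>\<^sub>E {1..<r}. \<Prod>j<size mu. u ^ (?M ! j * B ^ f j))"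
    by (rule prod_sum_PiE) auto
  finally show ?thesis
    unfolding monomial_exponent_def by (simp add: power_sum)
qed

lemma sum_powers_eq_0_imp_count_eq_0:
  fixes c :: "'a \<Rightarrow> 'c::{idom,real_normed_div_algebra}" and e :: "'a \<Rightarrow> 'b \<Rightarrow> nat"
  assumes fin: "finite P" "\<And>p. p \<in> P \<Longrightarrow> finite (F p)"
    and zero: "\<And>u. (\<Sum>p\<in>P. c p * (\<Sum>f\<in>F p. u ^ e p f)) = 0"
  shows "(\<Sum>p\<in>P. c p * of_nat (card {f\<in>F p. e p f = N})) = 0"
proof -
  define D where "D = N + (\<Sum>p\<in>P. \<Sum>f\<in>F p. e p f)"
  have bound: "e p f \<le> D" if "p \<in> P" "f \<in> F p" for p f
  proof -
    have "e p f \<le> (\<Sum>f\<in>F p. e p f)" using that fin by (intro member_le_sum) auto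
    also have "\<dots> \<le> (\<Sum>p\<in>P. \<Sum>f\<in>F p. e p f)" using that fin by (intro member_le_sum) auto
    finally show ?thesis unfolding D_def by simp
  qed
  define a where "a k = (\<Sum>p\<in>P. c p * of_nat (card {f\<in>F p. e p f = k}))" for k
  have "(\<Sum>k\<le>D. a k * u ^ k) = 0" for u
  proof -
    have "(\<Sum>f\<in>F p. u ^ e p f) = (\<Sum>k\<le>D. of_nat (card {f\<in>F p. e p f = k}) * u ^ k)"
      if "p \<in> P" for p
    proof -
      have "(\<Sum>f\<in>F p. u ^ e p f) = (\<Sum>k\<le>D. \<Sum>f | f \<in> F p \<and> e p f = k. u ^ e p f)"
        by (rule sum.group[symmetric]) (use fin that bound in auto)
      then show ?thesis by simp
    qed
    then have "(\<Sum>k\<le>D. a k * u ^ k) = (\<Sum>p\<in>P. c p * (\<Sum>f\<in>F p. u ^ e p f))"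
      unfolding a_def by (simp add: sum_distrib_left sum_distrib_right sum.swap[of _ "{..D}"] mult.assoc)
    then show ?thesis using zero by simp
  qed
  then have "a N = 0" using polyfun_eq_0[of a D] unfolding D_def by simp
  then show ?thesis unfolding a_def .
qed

text \<open>Substitute x_i = u^(B^i) with B larger than every |mu|. Among the mu with nonzero
  coefficient pick lam with the most parts; the exponent obtained by putting the parts of lam
  on distinct variables 1, 2, ... arises from no other such mu, so its coefficient is a
  positive multiple of c lam.\<close>
lemma plam_linear_independent:
  fixes c :: "nat multiset \<Rightarrow> complex"
  assumes fin: "finite P" and parts: "\<And>mu. mu \<in> P \<Longrightarrow> (\<forall>k\<in>#mu. 0 < k) \<and> size mu < r"
    and zero: "\<And>x. (\<Sum>mu\<in>P. c mu * plam r x mu) = 0"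
  shows "\<forall>mu\<in>P. c mu = 0"
proof (rule ccontr)
  define S where "S = {mu\<in>P. c mu \<noteq> 0}"
  assume "\<not> (\<forall>mu\<in>P. c mu = 0)"
  then obtain mu0 where "mu0 \<in> S" unfolding S_def by auto
  then obtain lam where "lam \<in> S" and longest: "\<And>mu. mu \<in> S \<Longrightarrow> size mu \<le> size lam"
    using ex_has_greatest_nat[of "\<lambda>mu. mu \<in> S" mu0 size r] parts unfolding S_def by auto
  then have lam: "lam \<in> P" "c lam \<noteq> 0" unfolding S_def by auto
  define B where "B = Suc (\<Sum>mu\<in>P. sum_mset mu)"
  define F where "F mu = {..<size mu} \<rightarrow>\<^sub>E {1..<r}" for mu :: "nat multiset"
  define e where "e mu f = monomial_exponent B (sorted_list_of_multiset mu) f" for mu f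
  define N where "N = e lam Suc"
  have sum_less: "sum_mset mu < B" if "mu \<in> P" for mu
    using member_le_sum[OF that _ fin, of sum_mset] unfolding B_def by simp
  have finite_F: "finite (F mu)" for mu
    unfolding F_def by (intro finite_PiE) auto
  have "(\<Sum>mu\<in>P. c mu * (\<Sum>f\<in>F mu. u ^ e mu f)) = 0" for u
    using zero[of "\<lambda>i. u ^ B ^ i"] unfolding plam_power_substitution F_def e_def .
  from sum_powers_eq_0_imp_count_eq_0[OF fin finite_F this]
  have count: "(\<Sum>mu\<in>P. c mu * of_nat (card {f\<in>F mu. e mu f = N})) = 0" .
  have none: "{f\<in>F mu. e mu f = N} = {}" if "mu \<in> S" "mu \<noteq> lam" for mu
  proof (intro equals0I)
    fix f assume "f \<in> {f\<in>F mu. e mu f = N}"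
    then have "mu = lam"
      using that longest[OF that(1)] parts[OF lam(1)] sum_less lam(1)
      by (intro monomial_exponent_eq_imp_eq[where B = B and K = r and f = f])
        (auto simp: S_def F_def e_def N_def)
    with that show False by simp
  qed
  have "c mu * of_nat (card {f\<in>F mu. e mu f = N}) = 0" if "mu \<in> P - {lam}" for mu
  proof (cases "c mu = 0")
    case False
    then have "{f\<in>F mu. e mu f = N} = {}" using none that unfolding S_def by blast
    then show ?thesis by (simp only: card.empty of_nat_0 mult_zero_right)
  qed simp
  then have "(\<Sum>mu\<in>P - {lam}. c mu * of_nat (card {f\<in>F mu. e mu f = N})) = 0"
    by (rule sum.neutral[OF ballI])
  then have "c lam * of_nat (card {f\<in>F lam. e lam f = N}) = 0"
    using count sum.remove[OF fin lam(1), of "\<lambda>mu. c mu * of_nat (card {f\<in>F mu. e mu f = N})"]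
    by simp
  moreover have "restrict Suc {..<size lam} \<in> {f\<in>F lam. e lam f = N}"
    using parts[OF lam(1)] unfolding F_def e_def N_def monomial_exponent_def
    by (auto intro: sum.cong)
  then have "card {f\<in>F lam. e lam f = N} \<noteq> 0"
    using finite_F by (subst card_0_eq) auto
  ultimately show False using lam(2) by simp
qed

lemma size_le_sum_mset: "\<forall>k\<in>#M. 0 < (k::nat) \<Longrightarrow> size M \<le> sum_mset M"
  by (induction M) auto

lemma finite_partitions_upto: "finite (partitions_upto n)"
proof (rule finite_subset)
  show "partitions_upto n \<subseteq> (\<Union>k\<le>n. multisets_of_size {1..n} k)"
  proof
    fix lam assume "lam \<in> partitions_upto n"
    then have pos: "\<forall>k\<in>#lam. 0 < k" and sum: "sum_mset lam \<le> n"
      unfolding partitions_upto_def by auto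
    have "k \<in> {1..n}" if "k \<in># lam" for k
      using pos that sum sum_mset.remove[OF that] by fastforce
    moreover have "size lam \<le> n" using size_le_sum_mset[OF pos] sum by simp
    ultimately show "lam \<in> (\<Union>k\<le>n. multisets_of_size {1..n} k)"
      unfolding multisets_of_size_def by auto
  qed
qed auto

section \<open>The vertex tensors\<close>

lemma mset_eq_filter_plus_replicate:
  "M = filter_mset (\<lambda>a. a \<noteq> r) M + replicate_mset (count M r) r"
  using multiset_partition[of M "\<lambda>a. a \<noteq> r"] by (simp add: filter_eq_replicate_mset)

lemma filter_mset_neq_replicate_mset [simp]: "filter_mset (\<lambda>a. a \<noteq> r) (replicate_mset k r) = {#}"
  by (induction k) auto

lemma Aten_only_r:
  assumes "filter_mset (\<lambda>a. a \<noteq> r) M = {#}" and "M \<noteq> {#}"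
  shows "Aten r x t M = t"
proof -
  have "M = replicate_mset (count M r) r"
    using mset_eq_filter_plus_replicate[of M r] assms(1) by simp
  then have "M = replicate_mset (size M) r" by (metis size_replicate_mset)
  with assms(2) show ?thesis
    unfolding Aten_def by (simp add: Suc_le_eq)
qed

lemma Aten_pair:
  assumes "filter_mset (\<lambda>a. a \<noteq> r) M = {#i, i#}" and "i \<in> {1..r}"
  shows "Aten r x t M = x i"
proof -
  have "i \<in># filter_mset (\<lambda>a. a \<noteq> r) M" using assms(1) by simp
  then have "i \<noteq> r" by simp
  then have i: "i \<in> {1..<r}" using assms(2) by auto
  have M_count: "M = add_mset i (add_mset i (replicate_mset (count M r) r))"
    using mset_eq_filter_plus_replicate[of M r] assms(1) by simp
  have "size M = Suc (Suc (count M r))"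
    using arg_cong[OF M_count, of size] by (simp only: size_add_mset size_replicate_mset)
  then have M: "M = add_mset i (add_mset i (replicate_mset (size M - 2) r))"
    using M_count by simp
  have not_only_r: "M \<noteq> replicate_mset (size M) r"
    using M \<open>i \<noteq> r\<close> by (metis in_replicate_mset union_single_eq_member)
  have "(THE j. j \<in> {1..<r} \<and> M = add_mset j (add_mset j (replicate_mset (size M - 2) r))) = i"
  proof (rule the_equality)
    fix j assume "j \<in> {1..<r} \<and> M = add_mset j (add_mset j (replicate_mset (size M - 2) r))"
    then obtain k where "M = add_mset j (add_mset j (replicate_mset k r))" and "j \<noteq> r" by auto
    then have "filter_mset (\<lambda>a. a \<noteq> r) M = {#j, j#}" by simp
    then have "j \<in># {#i, i#}" using assms(1) by (metis union_single_eq_member)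
    then show "j = i" by simp
  qed (use M i in blast)
  moreover have "2 \<le> size M" by (subst M) simp
  ultimately show ?thesis
    using M i not_only_r unfolding Aten_def by auto
qed

lemma Aten_neq_0_imp:
  assumes "Aten r x t M \<noteq> 0"
  shows "filter_mset (\<lambda>a. a \<noteq> r) M = {#} \<or> (\<exists>i. filter_mset (\<lambda>a. a \<noteq> r) M = {#i, i#})"
proof -
  have "M = replicate_mset (size M) r \<or>
      (\<exists>i\<in>{1..<r}. M = add_mset i (add_mset i (replicate_mset (size M - 2) r)))"
    using assms unfolding Aten_def by (auto split: if_splits)
  then show ?thesis
  proof (elim disjE bexE)
    assume "M = replicate_mset (size M) r"
    then obtain k where "M = replicate_mset k r" by blast
    then show ?thesis by simp
  next
    fix i assume "i \<in> {1..<r}" and "M = add_mset i (add_mset i (replicate_mset (size M - 2) r))"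
    then obtain k where "M = add_mset i (add_mset i (replicate_mset k r))" and "i \<noteq> r" by auto
    then show ?thesis by auto
  qed
qed

section \<open>Expanding the partition function over cycles\<close>

definition half_edges_at :: "('e \<Rightarrow> 'v \<times> 'v) \<Rightarrow> 'e set \<Rightarrow> 'v \<Rightarrow> ('e \<times> bool) set" where
  "half_edges_at ends S v = {h \<in> half_edges S. hv ends h = v}"

definition colours_at :: "('e \<Rightarrow> 'v \<times> 'v) \<Rightarrow> 'e set \<Rightarrow> ('e \<Rightarrow> nat) \<Rightarrow> 'v \<Rightarrow> nat multiset" where
  "colours_at ends S g v = image_mset (g \<circ> fst) (mset_set (half_edges_at ends S v))"

lemma finite_half_edges_at [simp]: "finite S \<Longrightarrow> finite (half_edges_at ends S v)"
  unfolding half_edges_at_def half_edges_def by simp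

lemma half_edges_at_filter:
  "half_edges_at ends {e\<in>E. P e} v = {h \<in> half_edges_at ends E v. P (fst h)}"
  unfolding half_edges_at_def half_edges_def by auto

lemma filter_colours_at:
  assumes "finite E"
  shows "filter_mset (\<lambda>a. a \<noteq> r) (colours_at ends E g v) = colours_at ends {e\<in>E. g e \<noteq> r} g v"
  using assms unfolding colours_at_def half_edges_at_filter
  by (simp add: filter_mset_image_mset)

lemma FAB_eq_sum_edge_colourings:
  fixes E :: "'e set" and ends :: "'e \<Rightarrow> 'v \<times> 'v"
  assumes fin: "finite E"
  shows "FAB r x t V E ends = (\<Sum>g\<in>E \<rightarrow>\<^sub>E {1..r}. \<Prod>v\<in>V. Aten r x t (colours_at ends E g v))"
proof -
  let ?H = "half_edges E"
  let ?T = "\<lambda>c. (\<Prod>e\<in>E. Bmat (c (e, False)) (c (e, True))) *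
     (\<Prod>v\<in>V. Aten r x t (image_mset c (mset_set {h \<in> half_edges E. hv ends h = v})))"
  define edgewise where "edgewise = {c \<in> ?H \<rightarrow>\<^sub>E {1..r}. \<forall>e\<in>E. c (e, False) = c (e, True)}"
  define lift where "lift g = restrict (g \<circ> fst) ?H" for g :: "'e \<Rightarrow> nat"
  have "FAB r x t V E ends = sum ?T (?H \<rightarrow>\<^sub>E {1..r})" unfolding FAB_def ..
  also have "\<dots> = sum ?T edgewise"
  proof (rule sum.mono_neutral_right)
    show "finite (?H \<rightarrow>\<^sub>E {1..r})"
      using fin unfolding half_edges_def by (intro finite_PiE) auto
    show "\<forall>c\<in>(?H \<rightarrow>\<^sub>E {1..r}) - edgewise. ?T c = 0"
      using fin unfolding edgewise_def by (auto simp: Bmat_def prod_zero_iff)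
  qed (auto simp: edgewise_def)
  also have "\<dots> = (\<Sum>g\<in>E \<rightarrow>\<^sub>E {1..r}. ?T (lift g))"
  proof (rule sum.reindex_bij_betw[symmetric])
    show "bij_betw lift (E \<rightarrow>\<^sub>E {1..r}) edgewise"
    proof (rule bij_betw_byWitness[where f' = "\<lambda>c. restrict (\<lambda>e. c (e, False)) E"])
      show "\<forall>c\<in>edgewise. lift (restrict (\<lambda>e. c (e, False)) E) = c"
        unfolding lift_def edgewise_def half_edges_def
        by (auto simp: fun_eq_iff PiE_def extensional_def) (metis (full_types))
    qed (auto simp: lift_def edgewise_def half_edges_def fun_eq_iff PiE_def extensional_def)
  qed
  also have "\<dots> = (\<Sum>g\<in>E \<rightarrow>\<^sub>E {1..r}. \<Prod>v\<in>V. Aten r x t (colours_at ends E g v))"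
  proof (intro sum.cong refl)
    fix g assume "g \<in> E \<rightarrow>\<^sub>E {1..r}"
    have "(\<Prod>e\<in>E. Bmat (lift g (e, False)) (lift g (e, True))) = 1"
      unfolding lift_def half_edges_def by (intro prod.neutral) (auto simp: Bmat_def)
    moreover have "image_mset (lift g) (mset_set {h \<in> ?H. hv ends h = v}) = colours_at ends E g v" for v
      using fin unfolding colours_at_def half_edges_at_def lift_def
      by (intro image_mset_cong) (auto simp: half_edges_def)
    ultimately show "?T (lift g) = (\<Prod>v\<in>V. Aten r x t (colours_at ends E g v))" by simp
  qed
  finally show ?thesis .
qed

lemma Aten_colours_at_neq_0_imp:
  assumes "finite E" and "Aten r x t (colours_at ends E g v) \<noteq> 0"
  defines "H \<equiv> half_edges_at ends {e\<in>E. g e \<noteq> r} v"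
  shows "H = {} \<or> (card H = 2 \<and> (\<forall>h\<in>H. \<forall>h'\<in>H. g (fst h) = g (fst h')))"
proof -
  have fin: "finite H" using assms(1) unfolding H_def by simp
  have col: "colours_at ends {e\<in>E. g e \<noteq> r} g v = image_mset (g \<circ> fst) (mset_set H)"
    unfolding colours_at_def H_def ..
  have "image_mset (g \<circ> fst) (mset_set H) = {#} \<or> (\<exists>i. image_mset (g \<circ> fst) (mset_set H) = {#i, i#})"
    using Aten_neq_0_imp[OF assms(2)] unfolding filter_colours_at[OF assms(1)] col .
  then show ?thesis
  proof (elim disjE exE)
    fix i assume i: "image_mset (g \<circ> fst) (mset_set H) = {#i, i#}"
    have "card H = 2" using arg_cong[OF i, of size] by simp
    moreover have "g (fst h) = i" if "h \<in> H" for h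
    proof -
      have "(g \<circ> fst) h \<in># image_mset (g \<circ> fst) (mset_set H)" using that fin by simp
      then show ?thesis unfolding i by simp
    qed
    ultimately show ?thesis by auto
  qed (use fin in \<open>simp add: mset_set_empty_iff\<close>)
qed

lemma Aten_colours_at_uncovered:
  assumes "finite E" and "half_edges_at ends E v \<noteq> {}"
    and "half_edges_at ends {e\<in>E. g e \<noteq> r} v = {}"
  shows "Aten r x t (colours_at ends E g v) = t"
proof (rule Aten_only_r)
  show "filter_mset (\<lambda>a. a \<noteq> r) (colours_at ends E g v) = {#}"
    unfolding filter_colours_at[OF assms(1)] using assms(3) by (simp add: colours_at_def)
  show "colours_at ends E g v \<noteq> {#}"
    using assms(1,2) by (simp add: colours_at_def mset_set_empty_iff)
qed

lemma Aten_colours_at_pair: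
  assumes "finite E" and "i \<in> {1..r}"
    and "card (half_edges_at ends {e\<in>E. g e \<noteq> r} v) = 2"
    and "\<And>h. h \<in> half_edges_at ends {e\<in>E. g e \<noteq> r} v \<Longrightarrow> g (fst h) = i"
  shows "Aten r x t (colours_at ends E g v) = x i"
proof (rule Aten_pair[OF _ assms(2)])
  obtain h h' where "half_edges_at ends {e\<in>E. g e \<noteq> r} v = {h, h'}" "h \<noteq> h'"
    using assms(3) by (meson card_2_iff)
  then show "filter_mset (\<lambda>a. a \<noteq> r) (colours_at ends E g v) = {#i, i#}"
    unfolding filter_colours_at[OF assms(1)] using assms(4) by (simp add: colours_at_def)
qed

lemma equiv_comp_rel: "equiv S (comp_rel ends S)"
proof (rule equivI)
  show "comp_rel ends S \<subseteq> S \<times> S"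
    unfolding comp_rel_def by (rule trancl_subset_Sigma) auto
  show "refl_on S (comp_rel ends S)"
    unfolding refl_on_def comp_rel_def by (auto simp: endpts_def)
  show "sym (comp_rel ends S)"
    unfolding comp_rel_def by (rule sym_trancl) (auto simp: sym_def)
  show "trans (comp_rel ends S)"
    unfolding comp_rel_def by (rule trans_trancl)
qed

lemma comp_rel_if_half_edges_at:
  assumes "h \<in> half_edges_at ends S v" and "h' \<in> half_edges_at ends S v"
  shows "(fst h, fst h') \<in> comp_rel ends S"
proof -
  have "v \<in> endpts ends (fst h) \<inter> endpts ends (fst h')"
    using assms unfolding half_edges_at_def hv_def endpts_def by (auto split: if_splits)
  then show ?thesis
    using assms unfolding comp_rel_def half_edges_at_def half_edges_def
    by (intro r_into_trancl) auto
qed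

lemma half_edge_at_endpoint:
  assumes "e \<in> S" and "v \<in> endpts ends e"
  obtains b where "(e, b) \<in> half_edges_at ends S v"
proof (cases "v = fst (ends e)")
  case True
  then show ?thesis using assms(1) that[of False] by (simp add: half_edges_at_def half_edges_def hv_def)
next
  case False
  then show ?thesis using assms that[of True] by (simp add: half_edges_at_def half_edges_def hv_def endpts_def)
qed

locale multigraph =
  fixes V :: "'v set" and E :: "'e set" and ends :: "'e \<Rightarrow> 'v \<times> 'v"
  assumes finite_V: "finite V" and finite_E: "finite E"
    and ends_in_V: "\<forall>e\<in>E. fst (ends e) \<in> V \<and> snd (ends e) \<in> V"
begin

definition weight :: "nat \<Rightarrow> (nat \<Rightarrow> complex) \<Rightarrow> complex \<Rightarrow> ('e \<Rightarrow> nat) \<Rightarrow> complex" where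
  "weight r x t g = (\<Prod>v\<in>V. Aten r x t (colours_at ends E g v))"

lemma sum_sdeg:
  assumes "S \<subseteq> E"
  shows "(\<Sum>v\<in>V. sdeg ends S v) = 2 * card S"
proof -
  have "hv ends h \<in> V" if "h \<in> half_edges S" for h
    using that assms ends_in_V unfolding half_edges_def hv_def by auto
  then have "half_edges S = (\<Union>v\<in>V. half_edges_at ends S v)"
    unfolding half_edges_at_def by auto
  moreover have "finite S" using assms finite_E finite_subset by blast
  moreover have "card (\<Union>v\<in>V. half_edges_at ends S v) = (\<Sum>v\<in>V. card (half_edges_at ends S v))"
    using finite_V \<open>finite S\<close> by (intro card_UN_disjoint) (auto simp: half_edges_at_def half_edges_def)
  ultimately have "card (half_edges S) = (\<Sum>v\<in>V. sdeg ends S v)"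
    unfolding sdeg_def half_edges_at_def by simp
  moreover have "card (half_edges S) = 2 * card S"
    unfolding half_edges_def by (simp add: card_cartesian_product)
  ultimately show ?thesis by simp
qed

lemma card_vertices_of_cycle:
  assumes "is_cycle V E ends S"
  shows "card {v\<in>V. half_edges_at ends S v \<noteq> {}} = card S"
proof -
  have fin: "finite (half_edges_at ends S v)" for v
    using assms finite_E finite_subset unfolding is_cycle_def by (metis finite_half_edges_at)
  have "2 * card S = (\<Sum>v\<in>V. sdeg ends S v)"
    using assms sum_sdeg unfolding is_cycle_def by simp
  also have "\<dots> = (\<Sum>v\<in>V. if half_edges_at ends S v \<noteq> {} then 2 else 0)"
    using assms fin unfolding is_cycle_def sdeg_def half_edges_at_def[symmetric]
    by (intro sum.cong refl) auto
  also have "\<dots> = 2 * card {v\<in>V. half_edges_at ends S v \<noteq> {}}"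
    using finite_V by (simp add: sum.If_cases Int_def)
  finally show ?thesis by simp
qed

end

locale multigraph_cycle = multigraph V E ends
  for V :: "'v set" and E :: "'e set" and ends :: "'e \<Rightarrow> 'v \<times> 'v" +
  fixes S :: "'e set"
  assumes cycle: "is_cycle V E ends S"
begin

abbreviation components :: "'e set set" where
  "components \<equiv> S // comp_rel ends S"

lemma S_subset_E: "S \<subseteq> E"
  using cycle unfolding is_cycle_def by simp

lemma finite_S: "finite S"
  using S_subset_E finite_E by (rule finite_subset)

lemma finite_components: "finite components"
  using finite_quotient[OF finite_S] equiv_type[OF equiv_comp_rel] by blast

lemma component_subset: "C \<in> components \<Longrightarrow> C \<subseteq> S"
  using in_quotient_imp_subset[OF equiv_comp_rel] .

lemma component_of_edge:
  assumes "C \<in> components" and "e \<in> C"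
  shows "comp_rel ends S `` {e} = C"
proof -
  obtain a where C: "C = comp_rel ends S `` {a}" using assms(1) by (rule quotientE)
  then have "(a, e) \<in> comp_rel ends S" using assms(2) by simp
  then show ?thesis
    unfolding C by (rule equiv_class_eq[OF equiv_comp_rel, symmetric])
qed

lemma half_edges_at_component:
  assumes C: "C \<in> components" and "half_edges_at ends C v \<noteq> {}"
  shows "half_edges_at ends C v = half_edges_at ends S v"
proof
  show "half_edges_at ends C v \<subseteq> half_edges_at ends S v"
    using component_subset[OF C] unfolding half_edges_at_def half_edges_def by auto
  obtain h where h: "h \<in> half_edges_at ends C v" using assms(2) by auto
  then have h_S: "h \<in> half_edges_at ends S v" and h_C: "fst h \<in> C"
    using component_subset[OF C] unfolding half_edges_at_def half_edges_def by auto
  have "fst h' \<in> C" if "h' \<in> half_edges_at ends S v" for h'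
    using comp_rel_if_half_edges_at[OF h_S that] by (rule in_quotient_imp_closed[OF equiv_comp_rel C h_C])
  then show "half_edges_at ends S v \<subseteq> half_edges_at ends C v"
    unfolding half_edges_at_def half_edges_def by auto
qed

lemma component_is_cycle:
  assumes C: "C \<in> components"
  shows "is_cycle V E ends C"
  unfolding is_cycle_def
proof
  show "C \<subseteq> E" using component_subset[OF C] S_subset_E by blast
  show "\<forall>v\<in>V. sdeg ends C v = 0 \<or> sdeg ends C v = 2"
  proof
    fix v assume "v \<in> V"
    then have "sdeg ends S v = 0 \<or> sdeg ends S v = 2" using cycle unfolding is_cycle_def by blast
    then show "sdeg ends C v = 0 \<or> sdeg ends C v = 2"
      using half_edges_at_component[OF C, of v]
      unfolding sdeg_def half_edges_at_def[symmetric] by (cases "half_edges_at ends C v = {}") auto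
  qed
qed

lemma sum_mset_cycle_type: "sum_mset (cycle_type ends S) = card S"
proof -
  have "sum_mset (cycle_type ends S) = (\<Sum>C\<in>components. card C)"
    unfolding cycle_type_def by (simp add: sum_unfold_sum_mset)
  also have "\<dots> = card (\<Union>components)"
  proof (rule card_Union_disjoint[symmetric])
    show "pairwise disjnt components"
      using quotient_disj[OF equiv_comp_rel] unfolding pairwise_def disjnt_def by blast
    show "C \<in> components \<Longrightarrow> finite C" for C
      using component_subset finite_S finite_subset by blast
  qed
  also have "\<Union>components = S" by (rule Union_quotient[OF equiv_comp_rel])
  finally show ?thesis .
qed

lemma cycle_type_in_partitions: "cycle_type ends S \<in> partitions_upto (card V)"
proof -
  have "0 < k" if "k \<in># cycle_type ends S" for k
  proof -
    have "k \<in> card ` components" using that finite_components by (simp add: cycle_type_def)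
    then obtain C where C: "C \<in> components" "k = card C" by blast
    then show ?thesis
      using in_quotient_imp_non_empty[OF equiv_comp_rel C(1)] component_subset[OF C(1)] finite_S
      by (simp add: card_gt_0_iff finite_subset)
  qed
  moreover have "card S \<le> card V"
    using card_vertices_of_cycle[OF cycle] card_mono[OF finite_V, of "{v\<in>V. half_edges_at ends S v \<noteq> {}}"]
    by simp
  ultimately show ?thesis
    unfolding partitions_upto_def using sum_mset_cycle_type by auto
qed

definition component_colouring :: "nat \<Rightarrow> ('e set \<Rightarrow> nat) \<Rightarrow> 'e \<Rightarrow> nat" where
  "component_colouring r c = (\<lambda>e\<in>E. if e \<in> S then c (comp_rel ends S `` {e}) else r)"

lemma component_colouring_in_PiE:
  assumes "1 \<le> r" and "c \<in> components \<rightarrow>\<^sub>E {1..<r}"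
  shows "component_colouring r c \<in> E \<rightarrow>\<^sub>E {1..r}"
  using assms quotientI[of _ S "comp_rel ends S"] unfolding component_colouring_def by fastforce

lemma coloured_edges_component_colouring:
  assumes "c \<in> components \<rightarrow>\<^sub>E {1..<r}"
  shows "{e\<in>E. component_colouring r c e \<noteq> r} = S"
proof -
  have "c (comp_rel ends S `` {e}) \<noteq> r" if "e \<in> S" for e
    using assms quotientI[OF that, of "comp_rel ends S"] by fastforce
  then show ?thesis
    using S_subset_E unfolding component_colouring_def by auto
qed

lemma component_colouring_on_component:
  assumes "C \<in> components" and "e \<in> C"
  shows "component_colouring r c e = c C"
  using assms component_subset S_subset_E component_of_edge
  unfolding component_colouring_def by auto

lemma inj_on_component_colouring: "inj_on (component_colouring r) (components \<rightarrow>\<^sub>E {1..<r})"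
proof (rule inj_onI)
  fix c c' assume c: "c \<in> components \<rightarrow>\<^sub>E {1..<r}" and c': "c' \<in> components \<rightarrow>\<^sub>E {1..<r}"
    and eq: "component_colouring r c = component_colouring r c'"
  show "c = c'"
  proof (rule PiE_ext[OF c c'])
    fix C assume C: "C \<in> components"
    then obtain e where "e \<in> C" using in_quotient_imp_non_empty[OF equiv_comp_rel] by blast
    then show "c C = c' C"
      using eq component_colouring_on_component[OF C] by metis
  qed
qed

lemma covered_vertices_eq_UN_components:
  "{v\<in>V. half_edges_at ends S v \<noteq> {}} = (\<Union>C\<in>components. {v\<in>V. half_edges_at ends C v \<noteq> {}})"
proof (intro equalityI subsetI)
  fix v assume "v \<in> {v\<in>V. half_edges_at ends S v \<noteq> {}}"
  then obtain h where v: "v \<in> V" and h: "h \<in> half_edges_at ends S v" by auto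
  then have "fst h \<in> S" unfolding half_edges_at_def half_edges_def by auto
  then have "comp_rel ends S `` {fst h} \<in> components" "fst h \<in> comp_rel ends S `` {fst h}"
    using equiv_class_self[OF equiv_comp_rel] by (auto intro: quotientI)
  moreover have "h \<in> half_edges_at ends (comp_rel ends S `` {fst h}) v"
    using h calculation(2) unfolding half_edges_at_def half_edges_def by auto
  ultimately show "v \<in> (\<Union>C\<in>components. {v\<in>V. half_edges_at ends C v \<noteq> {}})"
    using v by blast
qed (use half_edges_at_component in auto)

lemma component_vertices_disjoint:
  assumes C: "C \<in> components" and C': "C' \<in> components" and "C \<noteq> C'"
  shows "{v\<in>V. half_edges_at ends C v \<noteq> {}} \<inter> {v\<in>V. half_edges_at ends C' v \<noteq> {}} = {}"
proof (rule ccontr)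
  assume "\<not> ?thesis"
  then obtain v where "half_edges_at ends C v \<noteq> {}" "half_edges_at ends C' v \<noteq> {}" by auto
  then have "half_edges_at ends C v = half_edges_at ends C' v" "half_edges_at ends C v \<noteq> {}"
    using half_edges_at_component[OF C] half_edges_at_component[OF C'] by auto
  then obtain h where "h \<in> half_edges_at ends C v" "h \<in> half_edges_at ends C' v" by auto
  then have "fst h \<in> C \<inter> C'" unfolding half_edges_at_def half_edges_def by auto
  then show False using quotient_disj[OF equiv_comp_rel C C'] \<open>C \<noteq> C'\<close> by auto
qed

lemma Aten_component_colouring_uncovered:
  assumes "half_edges_at ends E v \<noteq> {}" and "half_edges_at ends S v = {}"
    and "c \<in> components \<rightarrow>\<^sub>E {1..<r}"
  shows "Aten r x t (colours_at ends E (component_colouring r c) v) = t"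
  by (rule Aten_colours_at_uncovered[OF finite_E assms(1)])
    (simp add: coloured_edges_component_colouring[OF assms(3)] assms(2))

lemma Aten_component_colouring_covered:
  assumes C: "C \<in> components" and v: "v \<in> V" "half_edges_at ends C v \<noteq> {}"
    and c: "c \<in> components \<rightarrow>\<^sub>E {1..<r}"
  shows "Aten r x t (colours_at ends E (component_colouring r c) v) = x (c C)"
proof (rule Aten_colours_at_pair[OF finite_E])
  have H: "half_edges_at ends S v = half_edges_at ends C v"
    using half_edges_at_component[OF C v(2)] by simp
  have "c C \<in> {1..<r}" using c C by blast
  then show "c C \<in> {1..r}" by simp
  have "card (half_edges_at ends S v) \<noteq> 0"
    using v(2) finite_half_edges_at[OF finite_S] unfolding H[symmetric] by (simp add: card_gt_0_iff)
  moreover have "sdeg ends S v = 0 \<or> sdeg ends S v = 2" using cycle v(1) unfolding is_cycle_def by blast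
  ultimately show "card (half_edges_at ends {e\<in>E. component_colouring r c e \<noteq> r} v) = 2"
    unfolding coloured_edges_component_colouring[OF c] sdeg_def half_edges_at_def[symmetric] by auto
  show "component_colouring r c (fst h) = c C"
    if "h \<in> half_edges_at ends {e\<in>E. component_colouring r c e \<noteq> r} v" for h
    using that C H unfolding coloured_edges_component_colouring[OF c]
    by (intro component_colouring_on_component) (auto simp: half_edges_at_def half_edges_def)
qed

lemma weight_component_colouring:
  assumes deg: "\<forall>v\<in>V. half_edges_at ends E v \<noteq> {}" and c: "c \<in> components \<rightarrow>\<^sub>E {1..<r}"
  shows "weight r x t (component_colouring r c) =
    t ^ (card V - card S) * (\<Prod>C\<in>components. x (c C) ^ card C)"
proof -
  let ?w = "\<lambda>v. Aten r x t (colours_at ends E (component_colouring r c) v)"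
  let ?U = "{v\<in>V. half_edges_at ends S v = {}}"
  let ?VC = "\<lambda>C. {v\<in>V. half_edges_at ends C v \<noteq> {}}"
  have V: "V = ?U \<union> (\<Union>C\<in>components. ?VC C)"
    using covered_vertices_eq_UN_components by blast
  have "card ?U + card S = card V"
    using card_vertices_of_cycle[OF cycle] finite_V
    by (metis (no_types, lifting) card_Un_disjoint finite_Un V covered_vertices_eq_UN_components
        disjoint_iff mem_Collect_eq)
  then have card_U: "card ?U = card V - card S" by simp
  have "prod ?w V = prod ?w ?U * prod ?w (\<Union>C\<in>components. ?VC C)"
    using finite_V by (subst V, intro prod.union_disjoint) (auto simp: covered_vertices_eq_UN_components[symmetric])
  also have "prod ?w ?U = t ^ (card V - card S)"
    using Aten_component_colouring_uncovered deg c card_U by simp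
  also have "prod ?w (\<Union>C\<in>components. ?VC C) = (\<Prod>C\<in>components. prod ?w (?VC C))"
    using finite_components finite_V component_vertices_disjoint by (intro prod.UNION_disjoint) auto
  also have "\<dots> = (\<Prod>C\<in>components. x (c C) ^ card C)"
    using Aten_component_colouring_covered[OF _ _ _ c]
      card_vertices_of_cycle[OF component_is_cycle] by (intro prod.cong refl) simp
  finally show ?thesis unfolding weight_def .
qed

lemma constant_on_comp_rel:
  assumes agree: "\<forall>v\<in>V. \<forall>h\<in>half_edges_at ends S v. \<forall>h'\<in>half_edges_at ends S v. g (fst h) = g (fst h')"
    and "(e, e') \<in> comp_rel ends S"
  shows "g e = g e'"
proof -
  have step: "g a = g b" if ab: "a \<in> S" "b \<in> S" and "endpts ends a \<inter> endpts ends b \<noteq> {}" for a b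
  proof -
    obtain v where v: "v \<in> endpts ends a" "v \<in> endpts ends b"
      using \<open>endpts ends a \<inter> endpts ends b \<noteq> {}\<close> by auto
    obtain ba bb where "(a, ba) \<in> half_edges_at ends S v" "(b, bb) \<in> half_edges_at ends S v"
      using half_edge_at_endpoint ab v by metis
    moreover have "v \<in> V" using v ab(1) S_subset_E ends_in_V unfolding endpts_def by auto
    ultimately show ?thesis using agree by fastforce
  qed
  show ?thesis
    using assms(2) unfolding comp_rel_def
    by (induction rule: trancl_induct) (use step in auto)
qed

lemma component_colouring_if_weight_neq_0:
  assumes g: "g \<in> E \<rightarrow>\<^sub>E {1..r}" and coloured: "{e\<in>E. g e \<noteq> r} = S"
    and nonzero: "weight r x t g \<noteq> 0"
  shows "g \<in> component_colouring r ` (components \<rightarrow>\<^sub>E {1..<r})"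
proof -
  have agree: "\<forall>v\<in>V. \<forall>h\<in>half_edges_at ends S v. \<forall>h'\<in>half_edges_at ends S v. g (fst h) = g (fst h')"
  proof (intro ballI)
    fix v h h' assume "v \<in> V" "h \<in> half_edges_at ends S v" "h' \<in> half_edges_at ends S v"
    moreover have "Aten r x t (colours_at ends E g v) \<noteq> 0"
      using nonzero \<open>v \<in> V\<close> finite_V unfolding weight_def by auto
    note Aten_colours_at_neq_0_imp[OF finite_E this]
    ultimately show "g (fst h) = g (fst h')"
      unfolding coloured by blast
  qed
  have const: "g e' = g e" if "e' \<in> comp_rel ends S `` {e}" for e e'
    using constant_on_comp_rel[OF agree] that by simp
  define c where "c = (\<lambda>C\<in>components. the_elem (g ` C))"
  have c_class: "c (comp_rel ends S `` {e}) = g e" if "e \<in> S" for e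
  proof -
    have "the_elem (g ` (comp_rel ends S `` {e})) = g e"
      using equiv_class_self[OF equiv_comp_rel that] const by (intro the_elem_image_unique) auto
    then show ?thesis using quotientI[OF that] unfolding c_def by simp
  qed
  have "c \<in> components \<rightarrow>\<^sub>E {1..<r}"
  proof
    fix C assume C: "C \<in> components"
    then obtain e where "e \<in> S" "C = comp_rel ends S `` {e}" by (rule quotientE)
    then show "c C \<in> {1..<r}" using c_class g coloured by fastforce
  qed (simp add: c_def)
  moreover have "g = component_colouring r c"
  proof
    fix e
    have "e \<in> E \<Longrightarrow> e \<notin> S \<Longrightarrow> g e = r" using coloured by blast
    then show "g e = component_colouring r c e"
      using c_class PiE_arb[OF g] unfolding component_colouring_def by auto
  qed
  ultimately show ?thesis by blast
qed

lemma sum_weights_with_coloured_edges: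
  assumes r: "1 \<le> r" and deg: "\<forall>v\<in>V. half_edges_at ends E v \<noteq> {}"
  shows "(\<Sum>g | g \<in> E \<rightarrow>\<^sub>E {1..r} \<and> {e\<in>E. g e \<noteq> r} = S. weight r x t g)
    = t ^ (card V - card S) * plam r x (cycle_type ends S)"
proof -
  let ?w = "weight r x t"
  let ?cols = "components \<rightarrow>\<^sub>E {1..<r}"
  have "(\<Sum>g | g \<in> E \<rightarrow>\<^sub>E {1..r} \<and> {e\<in>E. g e \<noteq> r} = S. ?w g) = sum ?w (component_colouring r ` ?cols)"
  proof (rule sum.mono_neutral_right)
    have "finite (E \<rightarrow>\<^sub>E {1..r})" using finite_E by (rule finite_PiE) simp
    then show "finite {g. g \<in> E \<rightarrow>\<^sub>E {1..r} \<and> {e\<in>E. g e \<noteq> r} = S}" by simp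
    show "component_colouring r ` ?cols \<subseteq> {g. g \<in> E \<rightarrow>\<^sub>E {1..r} \<and> {e\<in>E. g e \<noteq> r} = S}"
    proof (rule image_subsetI)
      fix c assume c: "c \<in> ?cols"
      show "component_colouring r c \<in> {g. g \<in> E \<rightarrow>\<^sub>E {1..r} \<and> {e\<in>E. g e \<noteq> r} = S}"
        using component_colouring_in_PiE[OF r c] coloured_edges_component_colouring[OF c] by simp
    qed
    show "\<forall>g\<in>{g. g \<in> E \<rightarrow>\<^sub>E {1..r} \<and> {e\<in>E. g e \<noteq> r} = S} - component_colouring r ` ?cols. ?w g = 0"
    proof
      fix g assume "g \<in> {g. g \<in> E \<rightarrow>\<^sub>E {1..r} \<and> {e\<in>E. g e \<noteq> r} = S} - component_colouring r ` ?cols"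
      then show "?w g = 0" using component_colouring_if_weight_neq_0[of g r x t] by blast
    qed
  qed
  also have "\<dots> = (\<Sum>c\<in>?cols. ?w (component_colouring r c))"
    by (rule sum.reindex[OF inj_on_component_colouring, unfolded comp_def])
  also have "\<dots> = (\<Sum>c\<in>?cols. t ^ (card V - card S) * (\<Prod>C\<in>components. x (c C) ^ card C))"
    using weight_component_colouring[OF deg] by simp
  also have "\<dots> = t ^ (card V - card S) * (\<Prod>C\<in>components. \<Sum>i\<in>{1..<r}. x i ^ card C)"
    using finite_components by (simp add: sum_distrib_left prod_sum_PiE)
  also have "(\<Prod>C\<in>components. \<Sum>i\<in>{1..<r}. x i ^ card C) = plam r x (cycle_type ends S)"
    unfolding plam_def cycle_type_def pk_def
    by (simp add: prod_unfold_prod_mset image_mset.compositionality comp_def)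
  finally show ?thesis .
qed

end

context multigraph
begin

lemma finite_cycles: "finite {S. is_cycle V E ends S}"
  using finite_E unfolding is_cycle_def by (auto intro: finite_subset[of _ "Pow E"])

lemma cycle_if_weight_neq_0:
  assumes "weight r x t g \<noteq> 0"
  shows "is_cycle V E ends {e\<in>E. g e \<noteq> r}"
  unfolding is_cycle_def sdeg_def half_edges_at_def[symmetric]
proof (intro conjI ballI)
  fix v assume "v \<in> V"
  then have "Aten r x t (colours_at ends E g v) \<noteq> 0" using assms finite_V unfolding weight_def by auto
  then show "card (half_edges_at ends {e\<in>E. g e \<noteq> r} v) = 0 \<or> card (half_edges_at ends {e\<in>E. g e \<noteq> r} v) = 2"
    using Aten_colours_at_neq_0_imp[OF finite_E] by fastforce
qed auto

lemma FAB_eq_sum_cycles: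
  assumes r: "1 \<le> r" and deg: "\<forall>v\<in>V. sdeg ends E v \<ge> 1"
  shows "FAB r x t V E ends =
    (\<Sum>S | is_cycle V E ends S. t ^ (card V - card S) * plam r x (cycle_type ends S))"
proof -
  let ?w = "weight r x t"
  let ?A = "{g \<in> E \<rightarrow>\<^sub>E {1..r}. is_cycle V E ends {e\<in>E. g e \<noteq> r}}"
  have deg': "\<forall>v\<in>V. half_edges_at ends E v \<noteq> {}"
    using deg unfolding sdeg_def half_edges_at_def[symmetric] by fastforce
  have fin_PiE: "finite (E \<rightarrow>\<^sub>E {1..r})"
    using finite_E by (rule finite_PiE) simp
  have "FAB r x t V E ends = sum ?w (E \<rightarrow>\<^sub>E {1..r})"
    unfolding weight_def by (rule FAB_eq_sum_edge_colourings[OF finite_E])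
  also have "\<dots> = sum ?w ?A"
    using fin_PiE cycle_if_weight_neq_0 by (intro sum.mono_neutral_right) auto
  also have "\<dots> = (\<Sum>S | is_cycle V E ends S. sum ?w {g. g \<in> ?A \<and> {e\<in>E. g e \<noteq> r} = S})"
    using fin_PiE finite_cycles by (intro sum.group[symmetric]) auto
  also have "\<dots> = (\<Sum>S | is_cycle V E ends S. t ^ (card V - card S) * plam r x (cycle_type ends S))"
  proof (intro sum.cong refl)
    fix S assume "S \<in> {S. is_cycle V E ends S}"
    then interpret multigraph_cycle V E ends S by unfold_locales simp
    have "{g. g \<in> ?A \<and> {e\<in>E. g e \<noteq> r} = S} = {g. g \<in> E \<rightarrow>\<^sub>E {1..r} \<and> {e\<in>E. g e \<noteq> r} = S}"
      using cycle by auto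
    then show "sum ?w {g. g \<in> ?A \<and> {e\<in>E. g e \<noteq> r} = S} =
        t ^ (card V - card S) * plam r x (cycle_type ends S)"
      using sum_weights_with_coloured_edges[OF r deg'] by simp
  qed
  finally show ?thesis .
qed

lemma FAB_eq_sum_partitions:
  assumes r: "1 \<le> r" and deg: "\<forall>v\<in>V. sdeg ends E v \<ge> 1"
  shows "FAB r x t V E ends = (\<Sum>lam\<in>partitions_upto (card V).
    t ^ (card V - sum_mset lam) * plam r x lam * of_nat (Ncyc V E ends lam))"
proof -
  let ?f = "\<lambda>S. t ^ (card V - card S) * plam r x (cycle_type ends S)"
  let ?cycles = "{S. is_cycle V E ends S}"
  have type_partition: "cycle_type ends S \<in> partitions_upto (card V)"
    and card_eq_sum_type: "card S = sum_mset (cycle_type ends S)" if "S \<in> ?cycles" for S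
  proof -
    interpret multigraph_cycle V E ends S using that by unfold_locales simp
    show "cycle_type ends S \<in> partitions_upto (card V)" by (rule cycle_type_in_partitions)
    show "card S = sum_mset (cycle_type ends S)" by (simp add: sum_mset_cycle_type)
  qed
  have "FAB r x t V E ends = sum ?f ?cycles"
    using FAB_eq_sum_cycles[OF r deg] by simp
  also have "\<dots> = (\<Sum>lam\<in>partitions_upto (card V). sum ?f {S. S \<in> ?cycles \<and> cycle_type ends S = lam})"
    using finite_cycles finite_partitions_upto type_partition by (intro sum.group[symmetric]) auto
  also have "\<dots> = (\<Sum>lam\<in>partitions_upto (card V).
      t ^ (card V - sum_mset lam) * plam r x lam * of_nat (Ncyc V E ends lam))"
  proof (intro sum.cong refl)
    fix lam
    have "sum ?f {S. S \<in> ?cycles \<and> cycle_type ends S = lam} =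
        sum (\<lambda>_. t ^ (card V - sum_mset lam) * plam r x lam) {S. S \<in> ?cycles \<and> cycle_type ends S = lam}"
      using card_eq_sum_type by (intro sum.cong refl) auto
    then show "sum ?f {S. S \<in> ?cycles \<and> cycle_type ends S = lam} =
        t ^ (card V - sum_mset lam) * plam r x lam * of_nat (Ncyc V E ends lam)"
      unfolding Ncyc_def by (simp add: mult.commute)
  qed
  finally show ?thesis .
qed

end

theorem corollary1:
  fixes r n :: nat and V :: "'v set" and E :: "'e set" and ends :: "'e \<Rightarrow> 'v \<times> 'v"
    and a :: "nat multiset \<Rightarrow> complex"
  assumes "r \<ge> 2"
    and "finite V" and "finite E"
    and "\<forall>e\<in>E. fst (ends e) \<in> V \<and> snd (ends e) \<in> V"
    and "card V = n" and "n \<le> r - 1"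
    and "\<forall>v\<in>V. sdeg ends E v \<ge> 1"
    and "\<forall>x t. FAB r x t V E ends =
           (\<Sum>lam\<in>partitions_upto n. t ^ (n - sum_mset lam) * plam r x lam * a lam)"
  shows "\<forall>lam\<in>partitions_upto n. a lam = of_nat (Ncyc V E ends lam)"
proof -
  interpret multigraph V E ends using assms(2-4) by unfold_locales
  have r: "1 \<le> r" and n_less_r: "n < r" using assms(1,6) by auto
  have "(\<Sum>lam\<in>partitions_upto n. (a lam - of_nat (Ncyc V E ends lam)) * plam r x lam) = 0" for x
    using assms(8) FAB_eq_sum_partitions[OF r assms(7), of x 1] assms(5)
    by (simp add: sum_subtractf algebra_simps)
  moreover have "(\<forall>k\<in>#lam. 0 < k) \<and> size lam < r" if "lam \<in> partitions_upto n" for lam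
    using that size_le_sum_mset[of lam] n_less_r unfolding partitions_upto_def by fastforce
  ultimately have "\<forall>lam\<in>partitions_upto n. a lam - of_nat (Ncyc V E ends lam) = 0"
    by (rule plam_linear_independent[OF finite_partitions_upto, rotated])
  then show ?thesis by simp
qed

end
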